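(* Let $n \ge 1$, $p\in[0,1]$, $t \ge 0$, and $\gamma:\mathbb{N}^*\to[0,1]$ non-increasing. Let $p_i := \gamma(i)p$ for $i\ge1$ and $q_n := \prod_{i=1}^n (1-p_i)$. Then \[ \text{(a)}\quad q_n e^{t p_n (1-q_n)} + (1-q_n)e^{-t p_n q_n} \le \exp\left(\frac{p_n t^2}{4n}\right), \] \[ \text{(b)}\quad q_n e^{t p_n (q_n-1)} + (1-q_n)e^{t p_n q_n} \le \exp\left(\frac{p_n t^2}{4n}\right). \] *)

theory Defs
  imports Complex_Main
begin

end

theory Submission
  imports Defs "HOL-Analysis.Harmonic_Numbers"
begin

text \<open>
  Write \<open>q\<close> for the product and \<open>a = p\<^sub>n\<close>. Since \<open>p\<^sub>i \<ge> a\<close> for \<open>i \<le> n\<close>, we have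
  \<open>q \<le> (1 - a)\<^sup>n \<le> exp (- n a)\<close>, so both claims follow from bounds on the centred
  Bernoulli(\<open>q\<close>) moment generating function at \<open>x = t a\<close> in terms of \<open>c = n a \<le> ln (1/q)\<close>.
  The lower tail (b) only needs \<open>exp (- s) \<le> 1 - s + s\<^sup>2/2\<close> and \<open>q \<le> exp (- c) \<le> 1/(2c)\<close>.
  The upper tail (a) is the bound \<open>ln (1 - q + q e\<^sup>x) \<le> q x + x\<^sup>2/(4L)\<close> with \<open>L = ln (1/q)\<close>
  (Berend and Kontorovich). The difference of the two sides is nonnegative for \<open>x \<ge> 4L\<close>, so
  it suffices to check it at stationary points \<open>z\<close>. There \<open>z = 2L(w - q)\<close> for the tilted
  probability \<open>w = q e\<^sup>z / (1 - q + q e\<^sup>z)\<close>, and the difference can be written as a function of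
  \<open>w\<close> alone in two ways. Their derivatives in \<open>w\<close> have opposite signs, that of
  \<open>\<plusminus>(2Lw(1 - w) - 1)\<close>, so following the monotone pieces from the points \<open>q\<close>, \<open>1/2\<close>
  and \<open>1 - Lq\<close>, where they are nonnegative, one of them is nonnegative at every \<open>w\<close>.
\<close>

section \<open>Numerical facts about the exponential\<close>

lemma exp_one_ge: "2718/1000 \<le> exp (1::real)"
  using e_approx_32 by (simp add: abs_if split: if_split_asm)

lemma exp_three_bounds: "18 \<le> exp (3::real)" "exp (3::real) \<le> 21"
proof -
  have e3: "exp (3::real) = exp 1 ^ 3"
    using exp_of_nat_mult[of 3 "1::real"] by simp
  have "(2718/1000::real)^3 \<le> exp 1 ^ 3"
    using exp_one_ge by (intro power_mono) auto
  moreover have "exp 1 ^ 3 \<le> (272/100::real)^3"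
    using e_less_272 by (intro power_mono) auto
  ultimately show "18 \<le> exp (3::real)" "exp (3::real) \<le> 21"
    unfolding e3 by (auto simp: power3_eq_cube)
qed

lemma exp_five_halves_le: "exp (5/2::real) \<le> 25/2"
proof -
  have "exp (5/2::real)^2 = exp 1 ^ 5"
    using exp_of_nat_mult[of 5 "1::real"] by (simp flip: exp_of_nat2_mult)
  also have "\<dots> \<le> (272/100)^5"
    using e_less_272 by (auto intro!: power_mono)
  also have "\<dots> \<le> (25/2)^2" by (simp add: power_divide)
  finally show ?thesis by (rule power2_le_imp_le) simp
qed

lemma two_mult_le_exp: "2 * c \<le> exp (c::real)"
proof (cases "c \<le> 0")
  case False
  have "2 * c \<le> 1 + c + c^2/2"
    using sum_power2_ge_zero[of "c - 1" 1] by (simp add: power2_eq_square field_simps)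
  also have "\<dots> \<le> exp c"
    using False by (intro exp_lower_Taylor_quadratic) simp
  finally show ?thesis .
qed (simp add: order_trans[OF _ less_imp_le[OF exp_gt_zero]])

lemma two_mult_sq_le_exp:
  fixes L :: real assumes "3 \<le> L" shows "2 * L^2 \<le> exp L"
proof -
  define y where "y = L - 3"
  have y: "0 \<le> y" using assms y_def by simp
  have "18 * (1 + y + y^2/2) - 2 * L^2 = 6 * y + 7 * y^2"
    unfolding y_def by (simp add: power2_eq_square field_simps)
  then have "2 * L^2 \<le> 18 * (1 + y + y^2/2)"
    using y by (smt (verit) zero_le_power2)
  also have "\<dots> \<le> exp 3 * exp y"
    using exp_three_bounds(1) exp_lower_Taylor_quadratic[OF y] y by (intro mult_mono) auto
  also have "\<dots> = exp L" by (simp add: y_def flip: exp_add)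
  finally show ?thesis .
qed

lemma exp_le_seven_mult:
  fixes L :: real assumes "2 \<le> L" "L \<le> 3" shows "exp L \<le> 7 * (L - 1) * L"
proof (cases "L \<le> 5/2")
  case True
  have "exp L \<le> exp (5/2)" using True by simp
  also have "\<dots> \<le> 7 * (2 - 1) * 2" using exp_five_halves_le by simp
  also have "\<dots> \<le> 7 * (L - 1) * L" using assms by (intro mult_mono) auto
  finally show ?thesis .
next
  case False
  have "exp L \<le> exp 3" using assms by simp
  also have "\<dots> \<le> 7 * (5/2 - 1) * (5/2)" using exp_three_bounds(2) by simp
  also have "\<dots> \<le> 7 * (L - 1) * L" using False by (intro mult_mono) auto
  finally show ?thesis .
qed

lemma exp_minus_le_quarter:
  fixes L :: real assumes "2 \<le> L" shows "exp (- L) \<le> 1/4"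
proof -
  have "4 \<le> 1 + 2 + 2^2/(2::real)" by simp
  also have "\<dots> \<le> exp 2" by (intro exp_lower_Taylor_quadratic) simp
  also have "\<dots> \<le> exp L" using assms by simp
  finally show ?thesis by (simp add: exp_minus field_simps)
qed

lemma ln_one_minus_ge:
  fixes d :: real assumes "0 \<le> d" "d \<le> 1/2" shows "- d - d^2 \<le> ln (1 - d)"
proof -
  let ?h = "\<lambda>x::real. ln (1 - x) + x + x^2"
  have "?h 0 \<le> ?h d"
  proof (rule DERIV_nonneg_imp_nondecreasing[OF assms(1)])
    fix x :: real assume x: "0 \<le> x" "x \<le> d"
    have x1: "x < 1" using x assms by simp
    have "DERIV ?h x :> x * (1 - 2*x) / (1 - x)"
      using x1 by (auto intro!: derivative_eq_intros simp: field_simps power2_eq_square)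
    moreover have "0 \<le> x * (1 - 2*x) / (1 - x)"
      using x x1 assms by (intro divide_nonneg_pos mult_nonneg_nonneg) auto
    ultimately show "\<exists>y. DERIV ?h x :> y \<and> 0 \<le> y" by blast
  qed
  then show ?thesis by simp
qed

lemma exp_minus_le_quadratic:
  fixes s :: real assumes "0 \<le> s" shows "exp (- s) \<le> 1 - s + s^2/2"
proof -
  let ?h = "\<lambda>x::real. 1 - x + x^2/2 - exp (- x)"
  have "?h 0 \<le> ?h s"
  proof (rule DERIV_nonneg_imp_nondecreasing[OF assms])
    fix x :: real
    have "DERIV ?h x :> exp (- x) - (1 - x)"
      by (auto intro!: derivative_eq_intros)
    then show "\<exists>y. DERIV ?h x :> y \<and> 0 \<le> y"
      using exp_minus_ge[of x] by force
  qed
  then show ?thesis by simp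
qed

section \<open>Stationary values of the Bernoulli log-MGF bound\<close>

text \<open>
  At a stationary point \<open>z\<close> of \<open>y \<mapsto> q y + y\<^sup>2/(4L) - ln (1 - q + q e\<^sup>y)\<close> the value
  equals both of the following expressions in the tilted probability \<open>w\<close>.
\<close>

definition stationary_value_1 :: "real \<Rightarrow> real \<Rightarrow> real \<Rightarrow> real" where
  "stationary_value_1 L q w = L * (w^2 - q^2) + ln (1 - w) - ln (1 - q)"

definition stationary_value_2 :: "real \<Rightarrow> real \<Rightarrow> real \<Rightarrow> real" where
  "stationary_value_2 L q w = L * ((1 - w)^2 + 2 * q - q^2) + ln w"

lemma stationary_value_1_deriv:
  "u < 1 \<Longrightarrow> (stationary_value_1 L q has_real_derivative (2 * L * u * (1 - u) - 1) / (1 - u)) (at u)"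
  unfolding stationary_value_1_def
  by (auto intro!: derivative_eq_intros simp: field_simps power2_eq_square)

lemma stationary_value_2_deriv:
  "0 < u \<Longrightarrow> (stationary_value_2 L q has_real_derivative (1 - 2 * L * u * (1 - u)) / u) (at u)"
  unfolding stationary_value_2_def
  by (auto intro!: derivative_eq_intros simp: field_simps power2_eq_square)

lemma stationary_value_1_mono:
  assumes "a \<le> b" "b < 1" "\<And>u. a \<le> u \<Longrightarrow> u \<le> b \<Longrightarrow> 1 \<le> 2 * L * u * (1 - u)"
  shows "stationary_value_1 L q a \<le> stationary_value_1 L q b"
proof (rule DERIV_nonneg_imp_nondecreasing[OF assms(1)])
  fix u assume "a \<le> u" "u \<le> b"
  with assms stationary_value_1_deriv[of u L q]
  show "\<exists>y. DERIV (stationary_value_1 L q) u :> y \<and> 0 \<le> y" by force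
qed

lemma stationary_value_1_antimono:
  assumes "a \<le> b" "b < 1" "\<And>u. a \<le> u \<Longrightarrow> u \<le> b \<Longrightarrow> 2 * L * u * (1 - u) \<le> 1"
  shows "stationary_value_1 L q b \<le> stationary_value_1 L q a"
proof (rule DERIV_nonpos_imp_nonincreasing[OF assms(1)])
  fix u assume "a \<le> u" "u \<le> b"
  with assms stationary_value_1_deriv[of u L q]
  show "\<exists>y. DERIV (stationary_value_1 L q) u :> y \<and> y \<le> 0" by (force simp: divide_nonpos_pos)
qed

lemma stationary_value_2_mono:
  assumes "0 < a" "a \<le> b" "\<And>u. a \<le> u \<Longrightarrow> u \<le> b \<Longrightarrow> 2 * L * u * (1 - u) \<le> 1"
  shows "stationary_value_2 L q a \<le> stationary_value_2 L q b"
proof (rule DERIV_nonneg_imp_nondecreasing[OF assms(2)])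
  fix u assume "a \<le> u" "u \<le> b"
  with assms stationary_value_2_deriv[of u L q]
  show "\<exists>y. DERIV (stationary_value_2 L q) u :> y \<and> 0 \<le> y" by force
qed

lemma stationary_value_2_antimono:
  assumes "0 < a" "a \<le> b" "\<And>u. a \<le> u \<Longrightarrow> u \<le> b \<Longrightarrow> 1 \<le> 2 * L * u * (1 - u)"
  shows "stationary_value_2 L q b \<le> stationary_value_2 L q a"
proof (rule DERIV_nonpos_imp_nonincreasing[OF assms(2)])
  fix u assume "a \<le> u" "u \<le> b"
  with assms stationary_value_2_deriv[of u L q]
  show "\<exists>y. DERIV (stationary_value_2 L q) u :> y \<and> y \<le> 0" by (force simp: divide_nonpos_pos)
qed

lemma bernoulli_variance_le:
  fixes L u w :: real
  assumes "0 \<le> L" "\<bar>w - 1/2\<bar> \<le> \<bar>u - 1/2\<bar>"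
  shows "2 * L * u * (1 - u) \<le> 2 * L * w * (1 - w)"
proof -
  have "(w - 1/2)^2 \<le> (u - 1/2)^2"
    using assms(2) by (simp add: abs_le_square_iff)
  then have "u * (1 - u) \<le> w * (1 - w)"
    by (simp add: power2_eq_square algebra_simps)
  then show ?thesis
    using mult_left_mono[of _ _ "2 * L"] assms(1) by (simp add: mult.assoc)
qed

lemma stationary_value_2_at_q: "q = exp (- L) \<Longrightarrow> stationary_value_2 L q q = 0"
  by (simp add: stationary_value_2_def power2_eq_square algebra_simps)

lemma stationary_value_2_nonneg_moderate:
  fixes L q :: real
  assumes q: "q = exp (- L)" and L: "2 \<le> L" "L \<le> 3" and w: "1/2 \<le> w" "w \<le> 1"
  shows "0 \<le> stationary_value_2 L q w"
proof -
  define d where "d = 1 - w"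
  have d: "0 \<le> d" "d \<le> 1/2" using w by (auto simp: d_def)
  have q0: "0 \<le> q" and q4: "q \<le> 1/4" using exp_minus_le_quarter[OF L(1)] q by auto
  have "1 = q * exp L" using q by (simp add: exp_minus)
  also have "\<dots> \<le> q * (7 * (L - 1) * L)"
    using exp_le_seven_mult[OF L] q0 by (rule mult_left_mono)
  also have "\<dots> = 7 * ((L - 1) * L * q)" by (simp add: algebra_simps)
  also have "\<dots> \<le> (4 * (2 - q)) * ((L - 1) * L * q)"
    using q0 q4 L by (intro mult_right_mono) auto
  also have "\<dots> = 4 * (L - 1) * (L * q * (2 - q))" by (simp add: algebra_simps)
  finally have K: "1 / (4 * (L - 1)) \<le> L * q * (2 - q)"
    using L by (simp add: field_simps)
  have "0 \<le> (2 * (L - 1) * d - 1)^2 / (4 * (L - 1))" using L by simp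
  also have "\<dots> = (L - 1) * d^2 - d + 1 / (4 * (L - 1))"
    using L by (simp add: field_simps power2_eq_square)
  also have "\<dots> \<le> L * (d^2 + 2 * q - q^2) - d - d^2"
    using K by (simp add: power2_eq_square algebra_simps)
  also have "\<dots> \<le> stationary_value_2 L q w"
    using ln_one_minus_ge[OF d] by (simp add: stationary_value_2_def d_def power2_commute)
  finally show ?thesis .
qed

lemma stationary_value_2_half_nonneg:
  fixes L q :: real
  assumes q: "q = exp (- L)" and L: "2 \<le> L"
  shows "0 \<le> stationary_value_2 L q (1/2)"
proof (cases "L \<le> 3")
  case True
  then show ?thesis using stationary_value_2_nonneg_moderate[OF q L] by simp
next
  case False
  have "0 \<le> L * (q * (2 - q))"
    using exp_minus_le_quarter[OF L] q L by simp
  moreover have "ln 2 \<le> L / 4"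
    using ln2_le_25_over_36 False by simp
  ultimately show ?thesis
    by (simp add: stationary_value_2_def ln_div power2_eq_square algebra_simps)
qed

lemma exp_minus_large_bounds:
  fixes L q :: real
  assumes q: "q = exp (- L)" and L: "3 \<le> L"
  shows "2 * L^2 * q \<le> 1" "L * q \<le> 1/6" "q \<le> 1/18"
proof -
  have "q * (2 * L^2) \<le> q * exp L"
    using two_mult_sq_le_exp[OF L] q by (intro mult_left_mono) auto
  then show "2 * L^2 * q \<le> 1"
    using q by (simp add: exp_minus mult.commute)
  moreover have "3 * (2 * L * q) \<le> L * (2 * L * q)"
    using q L by (intro mult_right_mono) auto
  ultimately show Lq: "L * q \<le> 1/6" by (simp add: power2_eq_square algebra_simps)
  have "3 * q \<le> L * q" using q L by (intro mult_right_mono) auto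
  with Lq show "q \<le> 1/18" by simp
qed

lemma stationary_value_1_half_nonneg:
  fixes L q :: real
  assumes q: "q = exp (- L)" and L: "3 \<le> L"
  shows "0 \<le> stationary_value_1 L q (1/2)"
proof -
  note b = exp_minus_large_bounds[OF q L]
  have q0: "0 < q" using q by simp
  have "ln (1 - q) \<le> 0" using q0 b by (subst ln_le_zero_iff) auto
  moreover have "(L * q) * q \<le> (1/6) * (1/18)"
    using b q0 by (intro mult_mono) auto
  moreover have "ln (2::real) \<le> 25/36" by (rule ln2_le_25_over_36)
  ultimately show ?thesis
    using L by (simp add: stationary_value_1_def ln_div power2_eq_square algebra_simps)
qed

lemma stationary_value_1_one_minus_Lq_nonneg:
  fixes L q :: real
  assumes q: "q = exp (- L)" and L: "3 \<le> L"
  shows "0 \<le> stationary_value_1 L q (1 - L * q)"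
proof -
  note b = exp_minus_large_bounds[OF q L]
  have q0: "0 < q" using q by simp
  have "1 \<le> ln L"
    using exp_one_ge e_less_272 L ln_ge_iff[of L 1] by simp
  then have "1 - L \<le> ln (1 - (1 - L * q))"
    using q L by (simp add: ln_mult)
  moreover have "ln (1 - q) \<le> 0" using q0 b by (subst ln_le_zero_iff) auto
  moreover have "1 \<le> L^2" using L by (simp add: one_le_power)
  then have "0 \<le> L * q^2 * (L^2 - 1)" using L by simp
  moreover have "L * ((1 - L * q)^2 - q^2) = L - 2 * L^2 * q + L * q^2 * (L^2 - 1)"
    by (simp add: power2_eq_square algebra_simps)
  ultimately show ?thesis
    using b(1) by (simp add: stationary_value_1_def)
qed

lemma bernoulli_variance_one_minus_Lq_le:
  fixes L q :: real
  assumes q: "q = exp (- L)" and L: "3 \<le> L"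
  shows "2 * L * (1 - L * q) * (1 - (1 - L * q)) \<le> 1"
proof -
  have "2 * L * (1 - L * q) * (1 - (1 - L * q)) = 2 * L^2 * q - 2 * L * (L * q)^2"
    by (simp add: power2_eq_square algebra_simps)
  moreover have "0 \<le> 2 * L * (L * q)^2" using L by simp
  ultimately show ?thesis
    using exp_minus_large_bounds(1)[OF q L] by linarith
qed

lemma stationary_value_2_one_minus_Lq_nonneg:
  fixes L q :: real
  assumes q: "q = exp (- L)" and L: "3 \<le> L"
  shows "0 \<le> stationary_value_2 L q (1 - L * q)"
proof -
  note b = exp_minus_large_bounds[OF q L]
  have q0: "0 < q" using q by simp
  have "- (L * q) - (L * q)^2 \<le> ln (1 - L * q)"
    using b q0 L by (intro ln_one_minus_ge) auto
  moreover have "(L * q)^2 \<le> (L * q) * (1 - q)"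
    using b q0 L by (simp add: power2_eq_square mult_left_mono)
  moreover have "0 \<le> L * (L * q)^2" using L by simp
  moreover have "stationary_value_2 L q (1 - L * q) = L * (L * q)^2 + L * q * (2 - q) + ln (1 - L * q)"
    by (simp add: stationary_value_2_def power2_eq_square algebra_simps)
  ultimately show ?thesis by (simp add: algebra_simps)
qed

lemma stationary_value_nonneg_large:
  fixes L q w :: real
  assumes q: "q = exp (- L)" and L: "3 \<le> L" and w: "1/2 \<le> w" "w < 1"
  shows "0 \<le> stationary_value_1 L q w \<or> 0 \<le> stationary_value_2 L q w"
proof -
  define s where "s = 1 - L * q"
  have "L * q \<le> 1/6" "0 < L * q" using exp_minus_large_bounds[OF q L] q L by auto
  then have s: "1/2 \<le> s" "s < 1" by (auto simp: s_def)
  have L0: "0 \<le> L" using L by simp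
  consider "w \<le> s" "1 \<le> 2 * L * w * (1 - w)" | "w \<le> s" "2 * L * w * (1 - w) \<le> 1" | "s \<le> w"
    by linarith
  then show ?thesis
  proof cases
    case 1
    have "stationary_value_1 L q (1/2) \<le> stationary_value_1 L q w"
    proof (rule stationary_value_1_mono[OF w])
      fix u assume "1/2 \<le> u" "u \<le> w"
      then have "2 * L * w * (1 - w) \<le> 2 * L * u * (1 - u)"
        by (intro bernoulli_variance_le L0) auto
      with 1 show "1 \<le> 2 * L * u * (1 - u)" by linarith
    qed
    then show ?thesis using stationary_value_1_half_nonneg[OF q L] by simp
  next
    case 2
    have "stationary_value_1 L q s \<le> stationary_value_1 L q w"
    proof (rule stationary_value_1_antimono[OF 2(1) s(2)])
      fix u assume "w \<le> u" "u \<le> s"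
      then have "2 * L * u * (1 - u) \<le> 2 * L * w * (1 - w)"
        using w by (intro bernoulli_variance_le L0) auto
      with 2 show "2 * L * u * (1 - u) \<le> 1" by linarith
    qed
    then show ?thesis using stationary_value_1_one_minus_Lq_nonneg[OF q L] by (simp add: s_def)
  next
    case 3
    have "stationary_value_2 L q s \<le> stationary_value_2 L q w"
    proof (rule stationary_value_2_mono[OF _ 3])
      fix u assume "s \<le> u" "u \<le> w"
      then have "2 * L * u * (1 - u) \<le> 2 * L * s * (1 - s)"
        using s by (intro bernoulli_variance_le L0) auto
      with bernoulli_variance_one_minus_Lq_le[OF q L] show "2 * L * u * (1 - u) \<le> 1"
        by (simp add: s_def)
    qed (use s in simp)
    then show ?thesis using stationary_value_2_one_minus_Lq_nonneg[OF q L] by (simp add: s_def)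
  qed
qed

lemma stationary_value_2_nonneg_below_half:
  fixes L q w :: real
  assumes q: "q = exp (- L)" and w: "q \<le> w" "w \<le> 1/2"
  shows "0 \<le> stationary_value_2 L q w"
proof -
  have q0: "0 < q" using q by simp
  have "q < 1" using w by linarith
  then have L0: "0 \<le> L" using q by simp
  show ?thesis
  proof (cases "2 * L * w * (1 - w) \<le> 1")
    case True
    have "stationary_value_2 L q q \<le> stationary_value_2 L q w"
    proof (rule stationary_value_2_mono[OF q0 w(1)])
      fix u assume "q \<le> u" "u \<le> w"
      then have "2 * L * u * (1 - u) \<le> 2 * L * w * (1 - w)"
        using w by (intro bernoulli_variance_le L0) auto
      with True show "2 * L * u * (1 - u) \<le> 1" by linarith
    qed
    then show ?thesis using stationary_value_2_at_q[OF q] by simp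
  next
    case False
    have "2 * L * w * (1 - w) \<le> 2 * L * (1/2) * (1 - 1/2)"
      using bernoulli_variance_le[OF L0, of "1/2" w] by simp
    then have L2: "2 \<le> L" using False by simp
    have "stationary_value_2 L q (1/2) \<le> stationary_value_2 L q w"
    proof (rule stationary_value_2_antimono[OF _ w(2)])
      fix u assume "w \<le> u" "u \<le> 1/2"
      then have "2 * L * w * (1 - w) \<le> 2 * L * u * (1 - u)"
        by (intro bernoulli_variance_le L0) auto
      with False show "1 \<le> 2 * L * u * (1 - u)" by linarith
    qed (use q0 w in simp)
    then show ?thesis using stationary_value_2_half_nonneg[OF q L2] by simp
  qed
qed

lemma stationary_value_nonneg:
  fixes L q w :: real
  assumes q: "q = exp (- L)" and w: "q < w" "w < 1"
  shows "0 \<le> stationary_value_1 L q w \<or> 0 \<le> stationary_value_2 L q w"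
proof -
  have q0: "0 < q" using q by simp
  have "q < 1" using w by linarith
  then have L0: "0 \<le> L" using q by simp
  consider "w \<le> 1/2" | "1/2 \<le> w" "L \<le> 2" | "1/2 \<le> w" "2 \<le> L" "L \<le> 3" | "1/2 \<le> w" "3 \<le> L"
    by linarith
  then show ?thesis
  proof cases
    case 1
    then show ?thesis using stationary_value_2_nonneg_below_half[OF q] w by simp
  next
    case 2
    have "stationary_value_2 L q q \<le> stationary_value_2 L q w"
    proof (rule stationary_value_2_mono[OF q0])
      fix u
      have "2 * L * u * (1 - u) \<le> 2 * L * (1/2) * (1 - 1/2)"
        using bernoulli_variance_le[OF L0, of "1/2" u] by simp
      then show "2 * L * u * (1 - u) \<le> 1" using 2 by simp
    qed (use w in simp)
    then show ?thesis using stationary_value_2_at_q[OF q] by simp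
  next
    case 3
    then show ?thesis using stationary_value_2_nonneg_moderate[OF q] w by simp
  next
    case 4
    then show ?thesis using stationary_value_nonneg_large[OF q] w by simp
  qed
qed

lemma nonneg_if_nonneg_at_stationary_points:
  fixes f f' :: "real \<Rightarrow> real"
  assumes cont: "continuous_on {a..b} f" and ends: "0 \<le> f a" "0 \<le> f b"
    and deriv: "\<And>y. a < y \<Longrightarrow> y < b \<Longrightarrow> (f has_real_derivative f' y) (at y)"
    and stationary: "\<And>y. a < y \<Longrightarrow> y < b \<Longrightarrow> f' y = 0 \<Longrightarrow> 0 \<le> f y"
    and x: "x \<in> {a..b}"
  shows "0 \<le> f x"
proof -
  obtain z where z: "z \<in> {a..b}" "\<And>y. y \<in> {a..b} \<Longrightarrow> f z \<le> f y"
    using continuous_attains_inf[OF compact_Icc _ cont] x by blast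
  have "0 \<le> f z"
  proof (cases "z = a \<or> z = b")
    case True
    then show ?thesis using ends by auto
  next
    case False
    then have z_in: "a < z" "z < b" using z(1) by auto
    have "f' z = 0"
    proof (rule DERIV_local_min[OF deriv[OF z_in]])
      show "0 < min (z - a) (b - z)" using z_in by simp
      show "\<forall>y. \<bar>z - y\<bar> < min (z - a) (b - z) \<longrightarrow> f z \<le> f y"
        using z(2) by (auto simp: abs_if split: if_splits)
    qed
    then show ?thesis using stationary z_in by blast
  qed
  then show ?thesis using z(2)[OF x] by linarith
qed

lemma stationary_value_eq:
  fixes L q z w :: real
  assumes q: "q = exp (- L)" and L: "0 < L"
    and w: "w = q * exp z / (1 - q + q * exp z)" and z: "z = 2 * L * (w - q)"
  shows "q * z + z^2 / (4 * L) - ln (1 - q + q * exp z) = stationary_value_1 L q w"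
    and "q * z + z^2 / (4 * L) - ln (1 - q + q * exp z) = stationary_value_2 L q w"
proof -
  define D where "D = 1 - q + q * exp z"
  have q0: "0 < q" and q1: "q < 1" using q L by auto
  have D: "0 < D" using q0 q1 unfolding D_def by (smt (verit) exp_gt_zero mult_pos_pos)
  have quad: "q * z + z^2 / (4 * L) = L * (w^2 - q^2)"
    using L by (simp add: z field_simps power2_eq_square)
  have "1 - w = (1 - q) / D" using w D by (simp add: D_def field_simps)
  then have "ln D = ln (1 - q) - ln (1 - w)" using D q1 by (simp add: ln_div)
  then show "q * z + z^2 / (4 * L) - ln (1 - q + q * exp z) = stationary_value_1 L q w"
    unfolding stationary_value_1_def D_def[symmetric] using quad by linarith
  have "ln w = - L + z - ln D" using w q q0 D by (simp add: D_def ln_div ln_mult)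
  moreover have "L * (w^2 - q^2) = L * ((1 - w)^2 + 2 * q - q^2) - L + z"
    by (simp add: z power2_eq_square algebra_simps)
  ultimately show "q * z + z^2 / (4 * L) - ln (1 - q + q * exp z) = stationary_value_2 L q w"
    unfolding stationary_value_2_def D_def[symmetric] using quad by linarith
qed

lemma ln_bernoulli_mgf_le:
  fixes q x :: real
  assumes q: "0 < q" "q < 1" and x: "0 \<le> x"
  shows "ln (1 - q + q * exp x) \<le> q * x + x^2 / (4 * ln (1 / q))"
proof -
  define L where "L = ln (1 / q)"
  have qL: "q = exp (- L)" and L: "0 < L" using q by (auto simp: L_def ln_div)
  define F where "F y = q * y + y^2 / (4 * L) - ln (1 - q + q * exp y)" for y
  have D: "0 < 1 - q + q * exp y" for y
    using q by (smt (verit) exp_gt_zero mult_pos_pos)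
  have far: "0 \<le> F y" if "4 * L \<le> y" for y
  proof -
    have y: "0 \<le> y" using that L by simp
    have "1 - q + q * exp y \<le> exp y"
      using y q mult_left_mono[of 1 "exp y" "1 - q"] by (simp add: algebra_simps)
    then have "ln (1 - q + q * exp y) \<le> y"
      using D by (metis ln_exp ln_le_cancel_iff exp_gt_zero)
    moreover have "y * (4 * L) \<le> y * y" using y that by (intro mult_left_mono) auto
    then have "y \<le> y^2 / (4 * L)" using L by (simp add: field_simps power2_eq_square)
    moreover have "0 \<le> q * y" using q y by simp
    ultimately show ?thesis by (simp add: F_def)
  qed
  have "0 \<le> F x"
  proof (rule nonneg_if_nonneg_at_stationary_points[where f = F and a = 0 and b = "max x (4 * L)"
        and f' = "\<lambda>y. q + 2 * y / (4 * L) - q * exp y / (1 - q + q * exp y)"])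
    show "continuous_on {0..max x (4 * L)} F"
      unfolding F_def using D L by (intro continuous_intros) (auto simp: less_imp_neq[symmetric])
    show "0 \<le> F 0" by (simp add: F_def)
    show "0 \<le> F (max x (4 * L))" by (rule far) simp
    fix y
    show "(F has_real_derivative q + 2 * y / (4 * L) - q * exp y / (1 - q + q * exp y)) (at y)"
      unfolding F_def using D[of y] L
      by - (rule derivative_eq_intros refl | simp)+
    assume y: "0 < y" and stationary: "q + 2 * y / (4 * L) - q * exp y / (1 - q + q * exp y) = 0"
    define w where "w = q * exp y / (1 - q + q * exp y)"
    then have yw: "y = 2 * L * (w - q)"
      using stationary L by (simp add: field_simps)
    have "1 - q + q * exp y < exp y"
      using y q mult_strict_left_mono[of 1 "exp y" "1 - q"] by (simp add: algebra_simps)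
    then have "q * (1 - q + q * exp y) < q * exp y" using q by simp
    then have "q < w" "w < 1" using q D[of y] by (simp_all add: w_def field_simps)
    then show "0 \<le> F y"
      using stationary_value_nonneg[OF qL] stationary_value_eq[OF qL L w_def yw]
      unfolding F_def by fastforce
  qed (use x in auto)
  then show ?thesis by (simp add: F_def L_def)
qed

section \<open>The Bernoulli moment generating function\<close>

lemma bernoulli_mgf_le:
  fixes q x :: real
  assumes q: "0 < q" "q < 1" and x: "0 \<le> x"
  shows "q * exp (x * (1 - q)) + (1 - q) * exp (- x * q) \<le> exp (x^2 / (4 * ln (1 / q)))"
proof -
  have D: "0 < 1 - q + q * exp x" using q by (smt (verit) exp_gt_zero mult_pos_pos)
  have "q * exp (x * (1 - q)) + (1 - q) * exp (- x * q) = exp (- x * q) * (1 - q + q * exp x)"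
    by (simp add: algebra_simps flip: exp_add)
  also have "\<dots> = exp (- x * q) * exp (ln (1 - q + q * exp x))"
    using D by simp
  also have "\<dots> \<le> exp (- x * q) * exp (q * x + x^2 / (4 * ln (1 / q)))"
    using ln_bernoulli_mgf_le[OF q x] by simp
  also have "\<dots> = exp (x^2 / (4 * ln (1 / q)))"
    by (simp flip: exp_add)
  finally show ?thesis .
qed

lemma bernoulli_lower_mgf_le:
  fixes q x :: real
  assumes q: "0 \<le> q" "q \<le> 1" and x: "0 \<le> x"
  shows "q * exp (x * (q - 1)) + (1 - q) * exp (x * q) \<le> exp (q * x^2 / 2)"
proof -
  have "q * exp (x * (q - 1)) + (1 - q) * exp (x * q) = exp (x * q) * (1 - q + q * exp (- x))"
    by (simp add: algebra_simps flip: exp_add)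
  also have "\<dots> \<le> exp (x * q) * (1 + (- q * x + q * x^2 / 2))"
  proof (rule mult_left_mono)
    have "q * exp (- x) \<le> q * (1 - x + x^2 / 2)"
      using exp_minus_le_quadratic[OF x] q(1) by (rule mult_left_mono)
    then show "1 - q + q * exp (- x) \<le> 1 + (- q * x + q * x^2 / 2)"
      by (simp add: algebra_simps)
  qed simp
  also have "\<dots> \<le> exp (x * q) * exp (- q * x + q * x^2 / 2)"
    by (intro mult_left_mono exp_ge_add_one_self) simp
  also have "\<dots> = exp (q * x^2 / 2)"
    by (simp add: algebra_simps flip: exp_add)
  finally show ?thesis .
qed

lemma bernoulli_mgf_bounds:
  fixes q c x :: real
  assumes q: "0 \<le> q" "q \<le> exp (- c)" and c: "0 < c" and x: "0 \<le> x"
  shows "q * exp (x * (1 - q)) + (1 - q) * exp (- x * q) \<le> exp (x^2 / (4 * c))"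
    and "q * exp (x * (q - 1)) + (1 - q) * exp (x * q) \<le> exp (x^2 / (4 * c))"
proof -
  have q1: "q < 1" using q c by (smt (verit) exp_less_one_iff neg_less_0_iff_less)
  show "q * exp (x * (1 - q)) + (1 - q) * exp (- x * q) \<le> exp (x^2 / (4 * c))"
  proof (cases "q = 0")
    case False
    then have "0 < q" using q by simp
    then have "ln q \<le> ln (exp (- c))" using q by (subst ln_le_cancel_iff) auto
    then have "c \<le> ln (1 / q)" using \<open>0 < q\<close> by (simp add: ln_div)
    have "x^2 / (4 * ln (1 / q)) \<le> x^2 / (4 * c)"
      using \<open>c \<le> ln (1 / q)\<close> c by (intro divide_left_mono) auto
    then show ?thesis
      using bernoulli_mgf_le[OF \<open>0 < q\<close> q1 x] by (smt (verit) exp_le_cancel_iff)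
  qed (use c in simp)
  have "q * (2 * c) \<le> q * exp c" using two_mult_le_exp q(1) by (rule mult_left_mono)
  also have "\<dots> \<le> 1" using q(2) by (simp add: exp_minus field_simps)
  finally have "q \<le> 1 / (2 * c)" using c by (simp add: field_simps)
  then have "q * x^2 / 2 \<le> x^2 / (4 * c)"
    using mult_right_mono[of q "1 / (2 * c)" "x^2 / 2"] by simp
  then show "q * exp (x * (q - 1)) + (1 - q) * exp (x * q) \<le> exp (x^2 / (4 * c))"
    using bernoulli_lower_mgf_le[OF q(1) _ x] q1 by (smt (verit) exp_le_cancel_iff)
qed

lemma prod_one_minus_le_exp:
  fixes r :: "nat \<Rightarrow> real"
  assumes r: "\<And>i. i \<in> {1..n} \<Longrightarrow> 0 \<le> r i \<and> r i \<le> 1"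
    and min: "\<And>i. i \<in> {1..n} \<Longrightarrow> r n \<le> r i"
  shows "0 \<le> (\<Prod>i=1..n. 1 - r i)" "(\<Prod>i=1..n. 1 - r i) \<le> exp (- (real n * r n))"
proof -
  show "0 \<le> (\<Prod>i=1..n. 1 - r i)" using r by (intro prod_nonneg) auto
  have "(\<Prod>i=1..n. 1 - r i) \<le> (\<Prod>i=1..n. exp (- r i))"
    using r exp_minus_ge by (intro prod_mono) auto
  also have "\<dots> = exp (- (\<Sum>i=1..n. r i))" by (simp add: sum_negf[symmetric] exp_sum)
  also have "\<dots> \<le> exp (- (real n * r n))"
    using sum_bounded_below[of "{1..n}" "r n" r] min by simp
  finally show "(\<Prod>i=1..n. 1 - r i) \<le> exp (- (real n * r n))" .
qed

theorem mainTheorem7: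
  fixes n :: nat and p t :: real and \<gamma> :: "nat \<Rightarrow> real"
  assumes "n \<ge> 1"
    and "0 \<le> p" "p \<le> 1"
    and "0 \<le> t"
    and "\<And>i. i \<ge> 1 \<Longrightarrow> 0 \<le> \<gamma> i \<and> \<gamma> i \<le> 1"
    and "\<And>i j. 1 \<le> i \<Longrightarrow> i \<le> j \<Longrightarrow> \<gamma> j \<le> \<gamma> i"
  shows "let pp = (\<lambda>i. \<gamma> i * p); q = (\<Prod>i=1..n. 1 - pp i) in
           q * exp (t * pp n * (1 - q)) + (1 - q) * exp (- t * pp n * q)
             \<le> exp (pp n * t^2 / (4 * real n))
         \<and> q * exp (t * pp n * (q - 1)) + (1 - q) * exp (t * pp n * q)
             \<le> exp (pp n * t^2 / (4 * real n))"
proof -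
  define a where "a = \<gamma> n * p"
  define q where "q = (\<Prod>i=1..n. 1 - \<gamma> i * p)"
  have r: "0 \<le> \<gamma> i * p \<and> \<gamma> i * p \<le> 1" "a \<le> \<gamma> i * p" if "i \<in> {1..n}" for i
    using assms(2,3) assms(5)[of i] assms(6)[of i n] that
    by (auto simp: a_def mult_le_one mult_right_mono)
  have q: "0 \<le> q" "q \<le> exp (- (real n * a))"
    using prod_one_minus_le_exp[of n "\<lambda>i. \<gamma> i * p"] r unfolding q_def a_def by simp_all
  show ?thesis
  proof (cases "a = 0")
    case False
    have "0 \<le> a" using r(1)[of n] assms(1) by (simp add: a_def)
    with False assms(1) have "0 < real n * a" by simp
    note bounds = bernoulli_mgf_bounds[OF q this, of "t * a"]
    have "(t * a)^2 / (4 * (real n * a)) = a * t^2 / (4 * real n)"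
      using False by (simp add: power2_eq_square)
    then show ?thesis
      using bounds assms(4) \<open>0 \<le> a\<close>
      unfolding Let_def q_def[symmetric] a_def[symmetric] by simp
  qed (unfold Let_def q_def[symmetric] a_def[symmetric], simp)
qed

end
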